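(* Let $G$ be a finite, simple, connected $(q+1)$-regular graph with $q\ge 1$, with $n$ vertices and $m$ edges, let $a\in[0,1]$ and $b\in\mathbb R$, and let $\tilde{\mathbf U}$ be the generalized Grover matrix of $G$ with parameters $a,b$. Set $\eta=(1-q)a+b(q+1)$ and $\sigma=b((1-q)a+bq)$. Then the $2m$ eigenvalues of $\tilde{\mathbf U}$ (counted with multiplicity) are: the $2n$ values \[ \lambda=\frac{\mu\eta\pm\sqrt{\mu^2\eta^2-4\sigma}}{2}, \] where $\mu$ runs over the eigenvalues of $\mathbf P(G)$ (with multiplicity), and the $2(m-n)$ values $b$ and $-b$, each with multiplicity $m-n$.
   Context: $D(G)$ is the set of $2m$ arcs of $G$ (for each edge $uv$, both $(u,v)$ and $(v,u)$); for $e=(u,v)$, $o(e)=u$, $t(e)=v$, $e^{-1}=(v,u)$, and $d_v=\deg v$. The generalized Grover matrix $\tilde{\mathbf U}=(\tilde U_{ef})_{e,f\in D(G)}$ has $\tilde U_{ef}=(2/d_{t(f)}-1)a+b$ if $t(f)=o(e)$ and $f\ne e^{-1}$; $\tilde U_{ef}=(2/d_{t(f)}-1)a$ if $f=e^{-1}$; $0$ otherwise. $\mathbf P(G)$ has entries $P_{uv}=1/\deg u$ if $u,v$ adjacent and $0$ otherwise. *)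

theory Defs
  imports "Jordan_Normal_Form.Char_Poly"
begin

definition simple_graph :: "nat \<Rightarrow> (nat \<Rightarrow> nat \<Rightarrow> bool) \<Rightarrow> bool" where
  "simple_graph n E \<longleftrightarrow> (\<forall>u v. E u v \<longrightarrow> u < n \<and> v < n) \<and>
     (\<forall>u v. E u v \<longrightarrow> E v u) \<and> (\<forall>u. \<not> E u u)"

definition connected_graph :: "nat \<Rightarrow> (nat \<Rightarrow> nat \<Rightarrow> bool) \<Rightarrow> bool" where
  "connected_graph n E \<longleftrightarrow> (\<forall>u<n. \<forall>v<n. E\<^sup>*\<^sup>* u v)"

definition deg :: "nat \<Rightarrow> (nat \<Rightarrow> nat \<Rightarrow> bool) \<Rightarrow> nat \<Rightarrow> nat" where
  "deg n E u = card {v. v < n \<and> E u v}"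

definition regular_graph :: "nat \<Rightarrow> (nat \<Rightarrow> nat \<Rightarrow> bool) \<Rightarrow> nat \<Rightarrow> bool" where
  "regular_graph n E k \<longleftrightarrow> (\<forall>u<n. deg n E u = k)"

definition num_edges :: "nat \<Rightarrow> (nat \<Rightarrow> nat \<Rightarrow> bool) \<Rightarrow> nat" where
  "num_edges n E = card {{u, v} | u v. u < n \<and> v < n \<and> E u v}"

text \<open>The arcs D(G), in a fixed enumeration (the characteristic polynomial does not
  depend on the enumeration). An arc e = (u,v) has o(e) = u, t(e) = v.\<close>
definition arcs :: "nat \<Rightarrow> (nat \<Rightarrow> nat \<Rightarrow> bool) \<Rightarrow> (nat \<times> nat) list" where
  "arcs n E = [(u, v). u \<leftarrow> [0..<n], v \<leftarrow> [0..<n], E u v]"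

definition gen_grover :: "nat \<Rightarrow> (nat \<Rightarrow> nat \<Rightarrow> bool) \<Rightarrow> real \<Rightarrow> real \<Rightarrow> real mat" where
  "gen_grover n E a b =
     (let A = arcs n E in
      mat (length A) (length A) (\<lambda>(i, j).
        let e = A ! i; f = A ! j; d = real (deg n E (snd f)) in
        if f = (snd e, fst e) then (2 / d - 1) * a
        else if snd f = fst e then (2 / d - 1) * a + b
        else 0))"

definition trans_mat :: "nat \<Rightarrow> (nat \<Rightarrow> nat \<Rightarrow> bool) \<Rightarrow> real mat" where
  "trans_mat n E = mat n n (\<lambda>(u, v). if E u v then 1 / real (deg n E u) else 0)"

end

theory Submission
  imports Defs
begin

(* Write the Grover matrix as U = alpha K L^T - b R, where K and L are the arc-origin and
   arc-terminus incidence matrices, R is the arc-reversal involution and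
   alpha = (2 / (q + 1) - 1) a + b.  For z^2 <> b^2 the matrix N = z I + b R is invertible with
   inverse (z I - b R) / (z^2 - b^2), so the matrix determinant lemma reduces
   det (z I - U) = det (N - alpha K L^T) to an n x n determinant; since L^T K = (q + 1) P and
   L^T R K = (q + 1) I, this gives
     (z^2 - b^2)^n det (z I - U) = det N * prod_mu (z^2 - mu eta z + sigma).
   Conjugation by the diagonal matrix of arc orientations turns R into -R, so
   det N = det (z I - b R) and det N ^ 2 = det ((z^2 - b^2) I) = (z^2 - b^2)^(2m).  Hence the
   squares of the two monic polynomials in the theorem agree outside {b, -b}, so the polynomials
   are equal. *)

section \<open>Polynomials\<close>

lemma poly_eqI_cofinite:
  fixes p q :: "'a :: {idom, ring_char_0} poly"
  assumes "finite S" and "\<And>z. z \<notin> S \<Longrightarrow> poly p z = poly q z"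
  shows "p = q"
proof (rule ccontr)
  assume "p \<noteq> q"
  then have "finite {z. poly (p - q) z = 0}" by (intro poly_roots_finite) simp
  moreover have "- S \<subseteq> {z. poly (p - q) z = 0}" using assms(2) by auto
  ultimately have "finite (UNIV :: 'a set)"
    using assms(1) by (metis finite_Un finite_subset Compl_partition)
  then show False using infinite_UNIV_char_0 by blast
qed

lemma monic_eq_if_square_eq:
  fixes p q :: "'a :: idom poly"
  assumes "monic p" and "monic q" and "p ^ 2 = q ^ 2"
  shows "p = q"
proof -
  have "(p - q) * (p + q) = 0"
    using assms(3) by (simp add: algebra_simps power2_eq_square)
  then consider "p = q" | "p = - q"
    by (auto simp: eq_neg_iff_add_eq_0)
  then show ?thesis
  proof cases
    case 2
    then have "(1 :: 'a) = - 1" using assms(1,2) by simp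
    then have "q = - q" by (metis smult_1_left smult_minus_left)
    with 2 show ?thesis by simp
  qed
qed

lemma quadratic_eq_linear_factors:
  fixes A s w :: "'a :: field_char_0"
  assumes "w ^ 2 = A ^ 2 - 4 * s"
  shows "[:s, - A, 1:] = [:- ((A + w) / 2), 1:] * [:- ((A - w) / 2), 1:]"
proof -
  have "(A + w) / 2 * ((A - w) / 2) = (A ^ 2 - w ^ 2) / 4"
    by (simp add: field_simps power2_eq_square)
  also have "\<dots> = s" using assms by simp
  finally have "(A + w) / 2 * ((A - w) / 2) = s" .
  moreover have "(A + w) / 2 + (A - w) / 2 = A" by (simp add: field_simps)
  ultimately show ?thesis by (simp add: algebra_simps)
qed

section \<open>Determinants\<close>

lemma det_one_minus_mult_commute:
  fixes A B :: "'a :: idom mat"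
  assumes A: "A \<in> carrier_mat p q" and B: "B \<in> carrier_mat q p"
  shows "det (1\<^sub>m p - A * B) = det (1\<^sub>m q - B * A)"
proof -
  define M where "M = four_block_mat (1\<^sub>m p) A B (1\<^sub>m q)"
  define X where "X = four_block_mat (1\<^sub>m p) (- A) (0\<^sub>m q p) (1\<^sub>m q)"
  have M: "M \<in> carrier_mat (p + q) (p + q)" and X: "X \<in> carrier_mat (p + q) (p + q)"
    unfolding M_def X_def using A B by auto
  have "det (1\<^sub>m p - A * B) = det (four_block_mat (1\<^sub>m p - A * B) (0\<^sub>m p q) B (1\<^sub>m q))"
    using A B by (subst det_four_block_mat_upper_right_zero[of _ p _ q]) auto
  also have "four_block_mat (1\<^sub>m p - A * B) (0\<^sub>m p q) B (1\<^sub>m q) = X * M"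
    unfolding X_def M_def using A B by (subst mult_four_block_mat[of _ p p _ q _ q _ _ p _ q]) auto
  also have "det (X * M) = det (M * X)"
    using det_mult[OF X M] det_mult[OF M X] by (simp add: mult.commute)
  also have "M * X = four_block_mat (1\<^sub>m p) (0\<^sub>m p q) B (1\<^sub>m q - B * A)"
    unfolding X_def M_def using A B by (subst mult_four_block_mat[of _ p p _ q _ q _ _ p _ q]) auto
  also have "det \<dots> = det (1\<^sub>m q - B * A)"
    using A B by (subst det_four_block_mat_upper_right_zero[of _ p _ q]) auto
  finally show ?thesis .
qed

lemma matrix_determinant_lemma:
  fixes N N' K L :: "'a :: idom mat"
  assumes N: "N \<in> carrier_mat l l" and N': "N' \<in> carrier_mat l l" and inv: "N * N' = 1\<^sub>m l"
    and K: "K \<in> carrier_mat l n" and L: "L \<in> carrier_mat n l"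
  shows "det (N - K * L) = det N * det (1\<^sub>m n - L * N' * K)"
proof -
  have N'K: "N' * K \<in> carrier_mat l n" using N' K by simp
  have "N * (1\<^sub>m l - N' * K * L) = N - N * (N' * K * L)"
    using N N'K L by (subst mult_minus_distrib_mat[of _ l l]) auto
  also have "N * (N' * K * L) = N * (N' * K) * L"
    by (rule assoc_mult_mat[OF N N'K L, symmetric])
  also have "\<dots> = K * L"
    using K by (simp add: assoc_mult_mat[OF N N' K, symmetric] inv)
  finally have "det (N - K * L) = det N * det (1\<^sub>m l - N' * K * L)"
    using N N'K L by (metis det_mult minus_carrier_mat mult_carrier_mat)
  also have "det (1\<^sub>m l - N' * K * L) = det (1\<^sub>m n - L * N' * K)"
    using det_one_minus_mult_commute[OF N'K L] L N' K by (simp add: assoc_mult_mat[OF L N' K])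
  finally show ?thesis .
qed

lemma mult_add_diff_involution:
  fixes R :: "'a :: comm_ring_1 mat"
  assumes R: "R \<in> carrier_mat l l" and RR: "R * R = 1\<^sub>m l"
  shows "(z \<cdot>\<^sub>m 1\<^sub>m l + b \<cdot>\<^sub>m R) * (z \<cdot>\<^sub>m 1\<^sub>m l - b \<cdot>\<^sub>m R) = (z * z - b * b) \<cdot>\<^sub>m 1\<^sub>m l"
proof -
  define M where "M = z \<cdot>\<^sub>m 1\<^sub>m l - b \<cdot>\<^sub>m R"
  have M: "M \<in> carrier_mat l l" unfolding M_def using R by (simp add: minus_carrier_mat)
  have "R * M = z \<cdot>\<^sub>m R - b \<cdot>\<^sub>m 1\<^sub>m l"
    unfolding M_def using R
    by (subst mult_minus_distrib_mat[of R l l]) (auto simp: mult_smult_distrib[of R l l] RR)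
  moreover have "(z \<cdot>\<^sub>m 1\<^sub>m l + b \<cdot>\<^sub>m R) * M = z \<cdot>\<^sub>m M + b \<cdot>\<^sub>m (R * M)"
    using R M by (subst add_mult_distrib_mat[of _ l l])
      (auto simp: mult_smult_assoc_mat[OF one_carrier_mat M] mult_smult_assoc_mat[OF R M])
  ultimately show ?thesis
    unfolding M_def using R by (auto simp: algebra_simps)
qed

lemma det_add_smult_involution_square:
  fixes R D :: "'a :: comm_ring_1 mat"
  assumes R: "R \<in> carrier_mat l l" and D: "D \<in> carrier_mat l l"
    and RR: "R * R = 1\<^sub>m l" and DD: "D * D = 1\<^sub>m l" and DRD: "D * R * D = - R"
  shows "det (z \<cdot>\<^sub>m 1\<^sub>m l + b \<cdot>\<^sub>m R) ^ 2 = (z * z - b * b) ^ l"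
proof -
  define N where "N = z \<cdot>\<^sub>m 1\<^sub>m l + b \<cdot>\<^sub>m R"
  have N: "N \<in> carrier_mat l l" unfolding N_def using R by simp
  have DN: "D * N = z \<cdot>\<^sub>m D + b \<cdot>\<^sub>m (D * R)"
    unfolding N_def using D R
    by (subst mult_add_distrib_mat[of D l l]) (auto simp: mult_smult_distrib[of D l l])
  have "D * N * D = z \<cdot>\<^sub>m (D * D) + b \<cdot>\<^sub>m (D * R * D)"
    unfolding DN using D R
    by (subst add_mult_distrib_mat[of _ l l]) (auto simp: mult_smult_assoc_mat[of _ l l _ l])
  then have DND: "D * N * D = z \<cdot>\<^sub>m 1\<^sub>m l - b \<cdot>\<^sub>m R"
    unfolding DD DRD using R by (auto simp: algebra_simps)
  have "det (D * N * D) = det N * det (D * D)"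
    using D N by (simp add: det_mult[of _ l])
  then have "det (z \<cdot>\<^sub>m 1\<^sub>m l - b \<cdot>\<^sub>m R) = det N"
    unfolding DND DD by simp
  then have "det N ^ 2 = det (N * (z \<cdot>\<^sub>m 1\<^sub>m l - b \<cdot>\<^sub>m R))"
    using N R by (simp add: det_mult[of _ l] minus_carrier_mat power2_eq_square)
  also have "\<dots> = (z * z - b * b) ^ l"
    unfolding N_def mult_add_diff_involution[OF R RR] by simp
  finally show ?thesis unfolding N_def .
qed

lemma poly_char_poly_eq_det:
  fixes A :: "'a :: field mat"
  assumes A: "A \<in> carrier_mat n n"
  shows "poly (char_poly A) z = det (z \<cdot>\<^sub>m 1\<^sub>m n - A)"
proof -
  have "- char_matrix A z = z \<cdot>\<^sub>m 1\<^sub>m n - A"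
    using A unfolding char_matrix_def by auto
  then show ?thesis using char_poly_matrix[OF A] by simp
qed

lemma det_smult_one_minus_smult:
  fixes P :: "'a :: field mat"
  assumes P: "P \<in> carrier_mat n n" and cp: "char_poly P = (\<Prod>\<mu>\<leftarrow>mus. [:- \<mu>, 1:])"
  shows "det (c \<cdot>\<^sub>m 1\<^sub>m n - d \<cdot>\<^sub>m P) = (\<Prod>\<mu>\<leftarrow>mus. c - d * \<mu>)"
proof -
  have len: "length mus = n"
    using degree_monic_char_poly[OF P] degree_linear_factors[of uminus mus] by (simp add: cp)
  show ?thesis
  proof (cases "d = 0")
    case True
    have "c \<cdot>\<^sub>m 1\<^sub>m n - 0 \<cdot>\<^sub>m P = c \<cdot>\<^sub>m 1\<^sub>m n" using P by auto
    moreover have "(\<Prod>\<mu>\<leftarrow>mus. c - 0 * \<mu>) = c ^ length mus" by (induction mus) auto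
    ultimately show ?thesis using True len by simp
  next
    case False
    have "c \<cdot>\<^sub>m 1\<^sub>m n - d \<cdot>\<^sub>m P = d \<cdot>\<^sub>m ((c / d) \<cdot>\<^sub>m 1\<^sub>m n - P)"
      using P False by (auto simp: right_diff_distrib)
    then have "det (c \<cdot>\<^sub>m 1\<^sub>m n - d \<cdot>\<^sub>m P) = d ^ length mus * poly (char_poly P) (c / d)"
      using P len by (simp add: poly_char_poly_eq_det)
    also have "poly (char_poly P) (c / d) = (\<Prod>\<mu>\<leftarrow>mus. c / d - \<mu>)"
      by (simp add: cp poly_prod_list o_def)
    also have "d ^ length mus * \<dots> = (\<Prod>\<mu>\<leftarrow>mus. d * (c / d - \<mu>))"
      by (induction mus) (simp_all add: mult_ac)
    also have "\<dots> = (\<Prod>\<mu>\<leftarrow>mus. c - d * \<mu>)"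
      using False by (simp add: right_diff_distrib)
    finally show ?thesis .
  qed
qed

lemma det_add_smult_involution_minus_low_rank:
  fixes K L R P :: "'a :: field mat"
  assumes K: "K \<in> carrier_mat l n" and L: "L \<in> carrier_mat n l" and R: "R \<in> carrier_mat l l"
    and P: "P \<in> carrier_mat n n" and RR: "R * R = 1\<^sub>m l"
    and LK: "L * K = k \<cdot>\<^sub>m P" and LRK: "L * R * K = k \<cdot>\<^sub>m 1\<^sub>m n" and s: "z * z \<noteq> b * b"
  shows "(z * z - b * b) ^ n * det (z \<cdot>\<^sub>m 1\<^sub>m l + b \<cdot>\<^sub>m R - \<alpha> \<cdot>\<^sub>m (K * L))
    = det (z \<cdot>\<^sub>m 1\<^sub>m l + b \<cdot>\<^sub>m R) * det ((z * z - b * b + \<alpha> * b * k) \<cdot>\<^sub>m 1\<^sub>m n - (\<alpha> * k * z) \<cdot>\<^sub>m P)"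
proof -
  define s where "s = z * z - b * b"
  define N where "N = z \<cdot>\<^sub>m 1\<^sub>m l + b \<cdot>\<^sub>m R"
  define M where "M = z \<cdot>\<^sub>m 1\<^sub>m l - b \<cdot>\<^sub>m R"
  have N: "N \<in> carrier_mat l l" and M: "M \<in> carrier_mat l l"
    unfolding N_def M_def using R by (auto simp: minus_carrier_mat)
  have s0: "s \<noteq> 0" using s unfolding s_def by simp
  have "N * ((1 / s) \<cdot>\<^sub>m M) = (1 / s) \<cdot>\<^sub>m (s \<cdot>\<^sub>m 1\<^sub>m l)"
    unfolding mult_smult_distrib[OF N M]
    unfolding N_def M_def s_def mult_add_diff_involution[OF R RR] ..
  then have inv: "N * ((1 / s) \<cdot>\<^sub>m M) = 1\<^sub>m l"
    using s0 by auto
  have LM: "L * M = z \<cdot>\<^sub>m L - b \<cdot>\<^sub>m (L * R)"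
    unfolding M_def using L R
    by (subst mult_minus_distrib_mat[of L n l]) (auto simp: mult_smult_distrib[of L n l])
  have "L * M * K = z \<cdot>\<^sub>m (L * K) - b \<cdot>\<^sub>m (L * R * K)"
    unfolding LM using L R K
    by (subst minus_mult_distrib_mat[of _ n l]) (auto simp: mult_smult_assoc_mat[of _ n l])
  moreover have "L * ((1 / s) \<cdot>\<^sub>m M) * (\<alpha> \<cdot>\<^sub>m K) = (1 / s) \<cdot>\<^sub>m (\<alpha> \<cdot>\<^sub>m (L * M * K))"
    using L M K
    by (simp add: mult_smult_distrib[of _ n l] mult_smult_assoc_mat[of _ n l])
      (auto simp: mult.left_commute)
  ultimately have "L * ((1 / s) \<cdot>\<^sub>m M) * (\<alpha> \<cdot>\<^sub>m K) = (\<alpha> / s) \<cdot>\<^sub>m (z \<cdot>\<^sub>m (L * K) - b \<cdot>\<^sub>m (L * R * K))"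
    using L K by auto
  then have "1\<^sub>m n - L * ((1 / s) \<cdot>\<^sub>m M) * (\<alpha> \<cdot>\<^sub>m K)
      = (1 / s) \<cdot>\<^sub>m ((s + \<alpha> * b * k) \<cdot>\<^sub>m 1\<^sub>m n - (\<alpha> * k * z) \<cdot>\<^sub>m P)"
    using P s0 unfolding LK LRK by (auto simp: field_simps)
  moreover have "\<alpha> \<cdot>\<^sub>m (K * L) = (\<alpha> \<cdot>\<^sub>m K) * L"
    using K L by (simp add: mult_smult_assoc_mat)
  ultimately have "det (N - \<alpha> \<cdot>\<^sub>m (K * L))
      = det N * ((1 / s) ^ n * det ((s + \<alpha> * b * k) \<cdot>\<^sub>m 1\<^sub>m n - (\<alpha> * k * z) \<cdot>\<^sub>m P))"
    using matrix_determinant_lemma[OF N smult_carrier_mat[OF M] inv smult_carrier_mat[OF K] L] P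
    by (simp add: minus_carrier_mat)
  then show ?thesis
    using s0 unfolding N_def s_def[symmetric] by (simp add: field_simps)
qed

section \<open>Arcs and incidence matrices\<close>

lemma arcs_eq_filter: "arcs n E = filter (case_prod E) (List.product [0..<n] [0..<n])"
proof -
  have "concat (map (\<lambda>v. if E u v then [(u, v)] else []) vs) = map (Pair u) (filter (E u) vs)"
    for u vs
    by (induction vs) auto
  then show ?thesis
    unfolding arcs_def by (simp add: product_concat_map filter_concat comp_def filter_map)
qed

lemma distinct_arcs: "distinct (arcs n E)"
  by (simp add: arcs_eq_filter distinct_product)

lemma set_arcs: "set (arcs n E) = {(u, v). u < n \<and> v < n \<and> E u v}"
  by (auto simp: arcs_eq_filter)

lemma nth_arcs:
  assumes "i < length (arcs n E)"
  shows "fst (arcs n E ! i) < n" and "snd (arcs n E ! i) < n"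
    and "E (fst (arcs n E ! i)) (snd (arcs n E ! i))"
  using nth_mem[OF assms] by (auto simp: set_arcs)

lemma swap_in_set_arcs:
  assumes "simple_graph n E" and "x \<in> set (arcs n E)"
  shows "prod.swap x \<in> set (arcs n E)"
  using assms unfolding simple_graph_def set_arcs by auto

lemma sum_arcs_nth: "(\<Sum>i = 0..<length (arcs n E). f (arcs n E ! i)) = (\<Sum>x\<in>set (arcs n E). f x)"
  by (simp add: sum.distinct_set_conv_list[OF distinct_arcs] sum_list_sum_nth)

lemma length_arcs: "length (arcs n E) = (\<Sum>u<n. deg n E u)"
proof -
  have "set (arcs n E) = (SIGMA u:{..<n}. {v. v < n \<and> E u v})"
    by (auto simp: set_arcs)
  then show ?thesis
    using distinct_card[OF distinct_arcs, of n E] by (simp add: deg_def)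
qed

lemma length_arcs_num_edges:
  assumes "simple_graph n E"
  shows "length (arcs n E) = 2 * num_edges n E"
proof -
  let ?S = "set (arcs n E)" and ?edge = "\<lambda>(u, v). {u, v :: nat}"
  have "length (arcs n E) = (\<Sum>e\<in>?edge ` ?S. card {x\<in>?S. ?edge x = e})"
    using distinct_card[OF distinct_arcs] card_eq_sum sum.image_gen[of ?S "\<lambda>_. 1 :: nat" ?edge]
    by simp
  also have "\<dots> = (\<Sum>e\<in>?edge ` ?S. 2)"
  proof (rule sum.cong[OF refl])
    fix e assume "e \<in> ?edge ` ?S"
    then obtain u v where uv: "(u, v) \<in> ?S" and e: "e = {u, v}" by auto
    then have "E v u" "u \<noteq> v" using assms unfolding simple_graph_def set_arcs by auto
    then have "{x\<in>?S. ?edge x = e} = {(u, v), (v, u)}"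
      using uv unfolding e set_arcs by (auto simp: doubleton_eq_iff)
    then show "card {x\<in>?S. ?edge x = e} = 2" using \<open>u \<noteq> v\<close> by simp
  qed
  also have "?edge ` ?S = {{u, v} | u v. u < n \<and> v < n \<and> E u v}"
    unfolding set_arcs by auto
  finally show ?thesis unfolding num_edges_def by simp
qed

definition arc_origin_mat :: "nat \<Rightarrow> (nat \<Rightarrow> nat \<Rightarrow> bool) \<Rightarrow> 'a :: zero_neq_one mat" where
  "arc_origin_mat n E =
     mat (length (arcs n E)) n (\<lambda>(i, v). if fst (arcs n E ! i) = v then 1 else 0)"

definition arc_terminus_mat :: "nat \<Rightarrow> (nat \<Rightarrow> nat \<Rightarrow> bool) \<Rightarrow> 'a :: zero_neq_one mat" where
  "arc_terminus_mat n E =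
     mat (length (arcs n E)) n (\<lambda>(i, v). if snd (arcs n E ! i) = v then 1 else 0)"

definition arc_reversal_mat :: "nat \<Rightarrow> (nat \<Rightarrow> nat \<Rightarrow> bool) \<Rightarrow> 'a :: zero_neq_one mat" where
  "arc_reversal_mat n E = mat (length (arcs n E)) (length (arcs n E))
     (\<lambda>(i, j). if arcs n E ! j = prod.swap (arcs n E ! i) then 1 else 0)"

definition arc_sign_mat :: "nat \<Rightarrow> (nat \<Rightarrow> nat \<Rightarrow> bool) \<Rightarrow> 'a :: ring_1 mat" where
  "arc_sign_mat n E = mat_diag (length (arcs n E))
     (\<lambda>i. if fst (arcs n E ! i) < snd (arcs n E ! i) then 1 else - 1)"

definition adjacency_mat :: "nat \<Rightarrow> (nat \<Rightarrow> nat \<Rightarrow> bool) \<Rightarrow> 'a :: zero_neq_one mat" where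
  "adjacency_mat n E = mat n n (\<lambda>(u, v). if E u v then 1 else 0)"

lemma arc_mat_carrier [simp]:
  "arc_origin_mat n E \<in> carrier_mat (length (arcs n E)) n"
  "arc_terminus_mat n E \<in> carrier_mat (length (arcs n E)) n"
  "arc_reversal_mat n E \<in> carrier_mat (length (arcs n E)) (length (arcs n E))"
  "arc_sign_mat n E \<in> carrier_mat (length (arcs n E)) (length (arcs n E))"
  by (simp_all add: arc_origin_mat_def arc_terminus_mat_def arc_reversal_mat_def arc_sign_mat_def)

lemma arc_mat_dim [simp]:
  "dim_row (arc_origin_mat n E) = length (arcs n E)" "dim_col (arc_origin_mat n E) = n"
  "dim_row (arc_terminus_mat n E) = length (arcs n E)" "dim_col (arc_terminus_mat n E) = n"
  "dim_row (arc_reversal_mat n E) = length (arcs n E)"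
  "dim_col (arc_reversal_mat n E) = length (arcs n E)"
  "dim_row (arc_sign_mat n E) = length (arcs n E)" "dim_col (arc_sign_mat n E) = length (arcs n E)"
  "dim_row (adjacency_mat n E) = n" "dim_col (adjacency_mat n E) = n"
  by (simp_all add: arc_origin_mat_def arc_terminus_mat_def arc_reversal_mat_def arc_sign_mat_def
      mat_diag_def adjacency_mat_def)

lemma arc_terminus_transpose_mult_origin:
  assumes "simple_graph n E"
  shows "transpose_mat (arc_terminus_mat n E) * arc_origin_mat n E
    = (adjacency_mat n E :: 'a :: comm_semiring_1 mat)"
    (is "?M = ?A")
proof (rule eq_matI)
  fix v w assume "v < dim_row ?A" "w < dim_col ?A"
  then have v: "v < n" and w: "w < n" by auto
  have "?M $$ (v, w) = (\<Sum>i = 0..<length (arcs n E). if arcs n E ! i = (w, v) then 1 else 0)"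
    using v w
    by (auto simp: arc_origin_mat_def arc_terminus_mat_def scalar_prod_def prod_eq_iff intro!: sum.cong)
  also have "\<dots> = (\<Sum>x\<in>set (arcs n E). if x = (w, v) then 1 else 0)"
    by (rule sum_arcs_nth)
  also have "\<dots> = (if E w v then 1 else 0)"
    using v w by simp (simp add: set_arcs)
  finally show "?M $$ (v, w) = ?A $$ (v, w)"
    using v w assms unfolding simple_graph_def by (auto simp: adjacency_mat_def)
qed auto

lemma arc_terminus_transpose_mult_reversal:
  assumes "simple_graph n E"
  shows "transpose_mat (arc_terminus_mat n E) * arc_reversal_mat n E
    = (transpose_mat (arc_origin_mat n E) :: 'a :: comm_semiring_1 mat)"
    (is "?M = ?K")
proof (rule eq_matI)
  fix v j assume "v < dim_row ?K" "j < dim_col ?K"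
  then have v: "v < n" and j: "j < length (arcs n E)" by auto
  let ?e = "arcs n E ! j"
  have "?M $$ (v, j) = (\<Sum>i = 0..<length (arcs n E).
      (\<lambda>x. (if snd x = v then 1 else 0) * (if ?e = prod.swap x then 1 else 0)) (arcs n E ! i))"
    using v j by (simp add: arc_terminus_mat_def arc_reversal_mat_def scalar_prod_def)
  also have "\<dots> = (\<Sum>x\<in>set (arcs n E).
      (if snd x = v then 1 else 0) * (if ?e = prod.swap x then 1 else 0))"
    by (rule sum_arcs_nth)
  also have "\<dots> = (\<Sum>x\<in>set (arcs n E). if x = prod.swap ?e then (if fst ?e = v then 1 else 0) else 0)"
    by (rule sum.cong) auto
  also have "\<dots> = (if fst ?e = v then 1 else 0)"
    using swap_in_set_arcs[OF assms nth_mem[OF j]] by simp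
  finally show "?M $$ (v, j) = ?K $$ (v, j)"
    using v j by (simp add: arc_origin_mat_def)
qed auto

lemma arc_origin_transpose_mult_origin:
  assumes "regular_graph n E k"
  shows "transpose_mat (arc_origin_mat n E) * arc_origin_mat n E
    = (of_nat k \<cdot>\<^sub>m 1\<^sub>m n :: 'a :: comm_semiring_1 mat)"
    (is "?M = ?I")
proof (rule eq_matI)
  fix v w assume "v < dim_row ?I" "w < dim_col ?I"
  then have v: "v < n" and w: "w < n" by auto
  have "?M $$ (v, w) = (\<Sum>i = 0..<length (arcs n E).
      (\<lambda>x. (if fst x = v then 1 else 0) * (if fst x = w then 1 else 0)) (arcs n E ! i))"
    using v w by (simp add: arc_origin_mat_def scalar_prod_def)
  also have "\<dots> = (\<Sum>x\<in>set (arcs n E). (if fst x = v then 1 else 0) * (if fst x = w then 1 else 0))"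
    by (rule sum_arcs_nth)
  also have "\<dots> = (\<Sum>x\<in>set (arcs n E). if fst x = v then (if v = w then 1 else 0) else 0)"
    by (rule sum.cong) auto
  also have "\<dots> = of_nat (card {x\<in>set (arcs n E). fst x = v}) * (if v = w then 1 else 0)"
    by (simp add: sum.inter_filter[symmetric])
  also have "{x\<in>set (arcs n E). fst x = v} = Pair v ` {u. u < n \<and> E v u}"
    using v by (auto simp: set_arcs)
  also have "card \<dots> = k"
    using assms v by (simp add: card_image inj_on_def regular_graph_def deg_def)
  finally show "?M $$ (v, w) = ?I $$ (v, w)"
    using v w by simp
qed auto

lemma arc_reversal_mult_reversal:
  assumes "simple_graph n E"
  shows "arc_reversal_mat n E * arc_reversal_mat n E
    = (1\<^sub>m (length (arcs n E)) :: 'a :: comm_semiring_1 mat)"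
    (is "?M = ?I")
proof (rule eq_matI)
  fix i j assume "i < dim_row ?I" "j < dim_col ?I"
  then have i: "i < length (arcs n E)" and j: "j < length (arcs n E)" by auto
  let ?e = "arcs n E ! i"
  have "?M $$ (i, j) = (\<Sum>k = 0..<length (arcs n E).
      (\<lambda>x. (if x = prod.swap ?e then 1 else 0) * (if arcs n E ! j = prod.swap x then 1 else 0))
        (arcs n E ! k))"
    using i j by (simp add: arc_reversal_mat_def scalar_prod_def)
  also have "\<dots> = (\<Sum>x\<in>set (arcs n E).
      (if x = prod.swap ?e then 1 else 0) * (if arcs n E ! j = prod.swap x then 1 else 0))"
    by (rule sum_arcs_nth)
  also have "\<dots> = (\<Sum>x\<in>set (arcs n E).
      if x = prod.swap ?e then (if arcs n E ! j = ?e then 1 else 0) else 0)"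
    by (rule sum.cong) auto
  also have "\<dots> = (if arcs n E ! j = ?e then 1 else 0)"
    using swap_in_set_arcs[OF assms nth_mem[OF i]] by simp
  finally show "?M $$ (i, j) = ?I $$ (i, j)"
    using i j distinct_arcs[of n E] by (auto simp: nth_eq_iff_index_eq)
qed auto

lemma arc_sign_mult_sign:
  "arc_sign_mat n E * arc_sign_mat n E = (1\<^sub>m (length (arcs n E)) :: 'a :: comm_ring_1 mat)"
proof -
  have "(if P then 1 else - 1) * (if P then 1 else - 1) = (1 :: 'a)" for P by simp
  then show ?thesis by (simp add: arc_sign_mat_def)
qed

lemma arc_sign_reversal_sign:
  assumes "simple_graph n E"
  shows "arc_sign_mat n E * arc_reversal_mat n E * arc_sign_mat n E
    = - (arc_reversal_mat n E :: 'a :: comm_ring_1 mat)"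
proof -
  have "fst (arcs n E ! i) < snd (arcs n E ! i) \<longleftrightarrow> \<not> fst (arcs n E ! j) < snd (arcs n E ! j)"
    if "i < length (arcs n E)" and "arcs n E ! j = prod.swap (arcs n E ! i)" for i j
  proof -
    obtain u v where uv: "arcs n E ! i = (u, v)" by fastforce
    then have "u \<noteq> v" using nth_arcs(3)[OF that(1)] assms unfolding simple_graph_def by auto
    then show ?thesis using uv that(2) by auto
  qed
  then show ?thesis
    by (auto simp: arc_sign_mat_def arc_reversal_mat_def
        mat_diag_mult_left[of _ "length (arcs n E)" "length (arcs n E)"]
        mat_diag_mult_right[of _ "length (arcs n E)" "length (arcs n E)"])
qed

section \<open>The generalized Grover matrix\<close>

lemma adjacency_eq_smult_trans_mat:
  assumes "regular_graph n E k"
  shows "adjacency_mat n E = of_nat k \<cdot>\<^sub>m (map_mat of_real (trans_mat n E) :: 'a :: real_field mat)"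
proof (rule eq_matI)
  fix u v assume "u < dim_row (of_nat k \<cdot>\<^sub>m (map_mat of_real (trans_mat n E) :: 'a mat))"
    and "v < dim_col (of_nat k \<cdot>\<^sub>m (map_mat of_real (trans_mat n E) :: 'a mat))"
  then have u: "u < n" and v: "v < n" by (auto simp: trans_mat_def)
  have "deg n E u = k" using assms u unfolding regular_graph_def by auto
  moreover have "deg n E u \<noteq> 0" if "E u v"
    using that v unfolding deg_def by (subst card_0_eq) auto
  ultimately show "adjacency_mat n E $$ (u, v)
      = (of_nat k \<cdot>\<^sub>m (map_mat of_real (trans_mat n E) :: 'a mat)) $$ (u, v)"
    using u v by (auto simp: adjacency_mat_def trans_mat_def)
qed (auto simp: trans_mat_def)

lemma gen_grover_eq_incidence:
  assumes "regular_graph n E k"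
  shows "map_mat of_real (gen_grover n E a b)
    = of_real ((2 / real k - 1) * a + b)
        \<cdot>\<^sub>m (arc_origin_mat n E * transpose_mat (arc_terminus_mat n E))
      - of_real b \<cdot>\<^sub>m (arc_reversal_mat n E :: 'a :: real_field mat)"
    (is "?U = ?V")
proof (rule eq_matI)
  let ?A = "arcs n E"
  fix i j assume "i < dim_row ?V" "j < dim_col ?V"
  then have i: "i < length ?A" and j: "j < length ?A" by auto
  have "(arc_origin_mat n E * transpose_mat (arc_terminus_mat n E)) $$ (i, j)
      = (\<Sum>v = 0..<n.
          (if fst (?A ! i) = v then 1 else 0) * (if snd (?A ! j) = v then 1 else (0 :: 'a)))"
    using i j by (simp add: arc_origin_mat_def arc_terminus_mat_def scalar_prod_def)
  also have "\<dots> = (\<Sum>v = 0..<n. if v = fst (?A ! i) then (if snd (?A ! j) = v then 1 else 0) else 0)"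
    by (rule sum.cong) auto
  also have "\<dots> = (if snd (?A ! j) = fst (?A ! i) then 1 else 0)"
    using nth_arcs(1)[OF i] by simp
  finally have KL: "(arc_origin_mat n E * transpose_mat (arc_terminus_mat n E)) $$ (i, j) = \<dots>" .
  have "deg n E (snd (?A ! j)) = k"
    using assms nth_arcs(2)[OF j] unfolding regular_graph_def by auto
  then show "?U $$ (i, j) = ?V $$ (i, j)"
    using i j KL by (auto simp: gen_grover_def Let_def arc_reversal_mat_def prod.swap_def)
qed (auto simp: gen_grover_def Let_def)

lemma poly_char_poly_gen_grover:
  fixes a b :: real and q :: nat and z :: "'a :: real_field" and mus :: "'a list"
  assumes G: "simple_graph n E" and reg: "regular_graph n E (q + 1)"
    and cp: "char_poly (map_mat of_real (trans_mat n E)) = (\<Prod>\<mu>\<leftarrow>mus. [:- \<mu>, 1:])"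
    and z: "z * z \<noteq> of_real b * of_real b"
  defines "\<eta> \<equiv> (1 - real q) * a + b * (real q + 1)" and "\<sigma> \<equiv> b * ((1 - real q) * a + b * real q)"
  shows "(z * z - of_real b * of_real b) ^ n
      * poly (char_poly (map_mat of_real (gen_grover n E a b))) z
    = det (z \<cdot>\<^sub>m 1\<^sub>m (length (arcs n E)) + of_real b \<cdot>\<^sub>m arc_reversal_mat n E)
      * (\<Prod>\<mu>\<leftarrow>mus. z * z - \<mu> * of_real \<eta> * z + of_real \<sigma>)"
proof -
  let ?l = "length (arcs n E)" and ?b = "of_real b :: 'a" and ?k = "of_nat (q + 1) :: 'a"
  let ?K = "arc_origin_mat n E :: 'a mat" and ?L = "transpose_mat (arc_terminus_mat n E) :: 'a mat"
    and ?R = "arc_reversal_mat n E :: 'a mat" and ?P = "map_mat of_real (trans_mat n E) :: 'a mat"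
  let ?U = "map_mat of_real (gen_grover n E a b) :: 'a mat"
  define \<alpha> :: 'a where "\<alpha> = of_real ((2 / real (q + 1) - 1) * a + b)"
  have U: "?U \<in> carrier_mat ?l ?l" by (simp add: gen_grover_def Let_def)
  have K: "?K \<in> carrier_mat ?l n" and L: "?L \<in> carrier_mat n ?l" and R: "?R \<in> carrier_mat ?l ?l"
    and P: "?P \<in> carrier_mat n n" by (simp_all add: trans_mat_def)
  have LK: "?L * ?K = ?k \<cdot>\<^sub>m ?P"
    unfolding arc_terminus_transpose_mult_origin[OF G]
    by (rule adjacency_eq_smult_trans_mat[OF reg])
  have LRK: "?L * ?R * ?K = ?k \<cdot>\<^sub>m 1\<^sub>m n"
    unfolding arc_terminus_transpose_mult_reversal[OF G] arc_origin_transpose_mult_origin[OF reg] ..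
  have "z \<cdot>\<^sub>m 1\<^sub>m ?l - ?U = z \<cdot>\<^sub>m 1\<^sub>m ?l + ?b \<cdot>\<^sub>m ?R - \<alpha> \<cdot>\<^sub>m (?K * ?L)"
    unfolding gen_grover_eq_incidence[OF reg] \<alpha>_def[symmetric] using K L R
    by (intro eq_matI) (simp_all add: algebra_simps)
  then have "(z * z - ?b * ?b) ^ n * poly (char_poly ?U) z
      = (z * z - ?b * ?b) ^ n * det (z \<cdot>\<^sub>m 1\<^sub>m ?l + ?b \<cdot>\<^sub>m ?R - \<alpha> \<cdot>\<^sub>m (?K * ?L))"
    by (simp add: poly_char_poly_eq_det[OF U])
  also have "\<dots> = det (z \<cdot>\<^sub>m 1\<^sub>m ?l + ?b \<cdot>\<^sub>m ?R)
        * det ((z * z - ?b * ?b + \<alpha> * ?b * ?k) \<cdot>\<^sub>m 1\<^sub>m n - (\<alpha> * ?k * z) \<cdot>\<^sub>m ?P)"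
    by (rule det_add_smult_involution_minus_low_rank[OF K L R P arc_reversal_mult_reversal[OF G]
          LK LRK z])
  also have "det ((z * z - ?b * ?b + \<alpha> * ?b * ?k) \<cdot>\<^sub>m 1\<^sub>m n - (\<alpha> * ?k * z) \<cdot>\<^sub>m ?P)
      = (\<Prod>\<mu>\<leftarrow>mus. z * z - ?b * ?b + \<alpha> * ?b * ?k - \<alpha> * ?k * z * \<mu>)"
    by (rule det_smult_one_minus_smult[OF P cp])
  also have "\<dots> = (\<Prod>\<mu>\<leftarrow>mus. z * z - \<mu> * of_real \<eta> * z + of_real \<sigma>)"
  proof -
    have "((2 / real (q + 1) - 1) * a + b) * real (q + 1) = \<eta>"
      unfolding \<eta>_def by (simp add: field_simps)
    then have \<alpha>k: "\<alpha> * ?k = of_real \<eta>"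
      unfolding \<alpha>_def by (metis of_real_mult of_real_of_nat_eq)
    have \<sigma>: "of_real \<sigma> = of_real \<eta> * ?b - ?b * ?b"
      unfolding \<eta>_def \<sigma>_def by (simp add: algebra_simps)
    have "z * z - ?b * ?b + \<alpha> * ?b * ?k - \<alpha> * ?k * z * \<mu>
        = z * z - \<mu> * of_real \<eta> * z + of_real \<sigma>" for \<mu>
      unfolding \<sigma> \<alpha>k[symmetric] by (simp add: algebra_simps)
    then show ?thesis by (simp only:)
  qed
  finally show ?thesis .
qed

lemma char_poly_gen_grover:
  fixes a b :: real and q :: nat and mus :: "'a :: real_field list"
  assumes G: "simple_graph n E" and q: "q \<ge> 1" and reg: "regular_graph n E (q + 1)"
    and m: "m = num_edges n E"
    and cp: "char_poly (map_mat of_real (trans_mat n E)) = (\<Prod>\<mu>\<leftarrow>mus. [:- \<mu>, 1:])"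
  defines "\<eta> \<equiv> (1 - real q) * a + b * (real q + 1)" and "\<sigma> \<equiv> b * ((1 - real q) * a + b * real q)"
  shows "char_poly (map_mat of_real (gen_grover n E a b))
    = (\<Prod>\<mu>\<leftarrow>mus. [:of_real \<sigma>, - (\<mu> * of_real \<eta>), 1:])
      * [:- of_real b, 1:] ^ (m - n) * [:of_real b, 1:] ^ (m - n)"
    (is "?p = ?Q")
proof -
  let ?l = "length (arcs n E)" and ?b = "of_real b :: 'a"
  let ?U = "map_mat of_real (gen_grover n E a b) :: 'a mat"
  let ?T = "\<lambda>z. \<Prod>\<mu>\<leftarrow>mus. z * z - \<mu> * of_real \<eta> * z + of_real \<sigma>"
  have U: "?U \<in> carrier_mat ?l ?l"
    by (simp add: gen_grover_def Let_def)
  have l_deg: "?l = n * (q + 1)"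
    using reg by (simp add: length_arcs regular_graph_def)
  have l_edges: "?l = 2 * m"
    using length_arcs_num_edges[OF G] m by simp
  (* 2 m = n (q + 1) >= 2 n, so the exponent m - n below is not truncated *)
  have "n * 2 \<le> n * (q + 1)" using q by (intro mult_le_mono2) simp
  with l_deg l_edges have mn: "n \<le> m" by linarith
  have sq: "poly (?p ^ 2) z = poly (?Q ^ 2) z" if z: "z \<notin> {?b, - ?b}" for z
  proof -
    define s where "s = z * z - ?b * ?b"
    have "s = (z - ?b) * (z + ?b)" unfolding s_def by (simp add: algebra_simps)
    with z have s0: "s \<noteq> 0" by (auto simp: add_eq_0_iff2)
    let ?N = "z \<cdot>\<^sub>m 1\<^sub>m ?l + ?b \<cdot>\<^sub>m arc_reversal_mat n E"
    have "z * z \<noteq> ?b * ?b" using s0 unfolding s_def by simp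
    from poly_char_poly_gen_grover[where a = a, OF G reg cp this, folded \<eta>_def \<sigma>_def]
    have char: "s ^ n * poly ?p z = det ?N * ?T z" unfolding s_def .
    have "det ?N ^ 2 = s ^ ?l"
      unfolding s_def
      by (rule det_add_smult_involution_square[OF _ _ arc_reversal_mult_reversal[OF G]
            arc_sign_mult_sign arc_sign_reversal_sign[OF G]]) simp_all
    then have det: "det ?N ^ 2 = (s ^ n * s ^ (m - n)) ^ 2"
      using l_edges mn by (simp flip: power_add power_mult) (simp add: mult.commute)
    have "poly ?Q z = ?T z * s ^ (m - n)"
      by (simp add: poly_prod_list o_def s_def algebra_simps power_mult_distrib[symmetric])
    with char det have "(s ^ n * poly ?p z) ^ 2 = (s ^ n * poly ?Q z) ^ 2"
      by (simp add: power_mult_distrib)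
    with s0 show ?thesis
      by (simp add: power_mult_distrib)
  qed
  have "monic ?p"
    using degree_monic_char_poly[OF U] by simp
  moreover have "monic ?Q"
    by (auto intro!: monic_mult monic_power monic_prod_list)
  moreover from sq have "?p ^ 2 = ?Q ^ 2"
    by (intro poly_eqI_cofinite[of "{?b, - ?b}"]) auto
  ultimately show ?thesis
    by (rule monic_eq_if_square_eq)
qed

theorem corollary4:
  fixes n q m :: nat and E :: "nat \<Rightarrow> nat \<Rightarrow> bool" and a b :: real
    and mus :: "complex list"
  assumes "simple_graph n E" and "connected_graph n E"
    and "q \<ge> 1" and "regular_graph n E (q + 1)"
    and "m = num_edges n E"
    and "0 \<le> a" and "a \<le> 1"
    and "char_poly (map_mat complex_of_real (trans_mat n E)) = (\<Prod>\<mu>\<leftarrow>mus. [:- \<mu>, 1:])"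
  shows "let \<eta> = (1 - real q) * a + b * (real q + 1);
             \<sigma> = b * ((1 - real q) * a + b * real q)
         in char_poly (map_mat complex_of_real (gen_grover n E a b)) =
              (\<Prod>\<mu>\<leftarrow>mus.
                  [:- ((\<mu> * of_real \<eta> + csqrt (\<mu>\<^sup>2 * of_real (\<eta>\<^sup>2) - 4 * of_real \<sigma>)) / 2), 1:]
                * [:- ((\<mu> * of_real \<eta> - csqrt (\<mu>\<^sup>2 * of_real (\<eta>\<^sup>2) - 4 * of_real \<sigma>)) / 2), 1:])
              * [:- complex_of_real b, 1:] ^ (m - n)
              * [:complex_of_real b, 1:] ^ (m - n)"
proof -
  define \<eta> where "\<eta> = (1 - real q) * a + b * (real q + 1)"
  define \<sigma> where "\<sigma> = b * ((1 - real q) * a + b * real q)"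
  have char: "char_poly (map_mat complex_of_real (gen_grover n E a b))
      = (\<Prod>\<mu>\<leftarrow>mus. [:of_real \<sigma>, - (\<mu> * of_real \<eta>), 1:])
        * [:- complex_of_real b, 1:] ^ (m - n) * [:complex_of_real b, 1:] ^ (m - n)"
    unfolding \<eta>_def \<sigma>_def by (rule char_poly_gen_grover[OF assms(1,3,4,5,8)])
  have factor: "[:of_real \<sigma>, - (\<mu> * of_real \<eta>), 1:]
      = [:- ((\<mu> * of_real \<eta> + csqrt (\<mu>\<^sup>2 * of_real (\<eta>\<^sup>2) - 4 * of_real \<sigma>)) / 2), 1:]
        * [:- ((\<mu> * of_real \<eta> - csqrt (\<mu>\<^sup>2 * of_real (\<eta>\<^sup>2) - 4 * of_real \<sigma>)) / 2), 1:]" for \<mu>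
    by (rule quadratic_eq_linear_factors) (simp add: power_mult_distrib)
  show ?thesis
    unfolding Let_def \<eta>_def[symmetric] \<sigma>_def[symmetric] char factor ..
qed

end
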